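(* Let $G$ be a group with finite generating set $S$, and let $F\subset G$ be a finite nonempty set which is optimal for the outer boundary. Then there is a set $F^*$ with $|F^*|=|F|$ which is optimal for the outer boundary and such that $F^*\cup\partial_{out}F^*$ is optimal for the inner boundary. Furthermore, every set of cardinality $|F^*\cup\partial_{out}F^*|$ which is optimal for the inner boundary is of the form $F''\cup\partial_{out}F''$ for some set $F''$ with $|F''|=|F|$ which is optimal for the outer boundary.
   Context: For finite $F\subset G$: $\partial_{in}F=\{g\in F:\exists s\in S\cup S^{-1}, gs\notin F\}$ and $\partial_{out}F=\{gs:g\in F,s\in S\cup S^{-1}\}\setminus F$. A finite nonempty set $F$ is optimal for the inner (resp. outer) boundary if for every finite nonempty $F'$ with $|F'|\leq|F|$ one has $\frac{|\partial F'|}{|F'|}\geq\frac{|\partial F|}{|F|}$, with strict inequality whenever $|F'|<|F|$, where $\partial=\partial_{in}$ (resp. $\partial_{out}$). *)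

theory Defs
  imports "HOL-Algebra.Algebra"
begin

definition sym_gens :: "('a, 'b) monoid_scheme \<Rightarrow> 'a set \<Rightarrow> 'a set" where
  "sym_gens G S = S \<union> (\<lambda>s. inv\<^bsub>G\<^esub> s) ` S"

definition inner_boundary :: "('a, 'b) monoid_scheme \<Rightarrow> 'a set \<Rightarrow> 'a set \<Rightarrow> 'a set" where
  "inner_boundary G S F = {g \<in> F. \<exists>s \<in> sym_gens G S. g \<otimes>\<^bsub>G\<^esub> s \<notin> F}"

definition outer_boundary :: "('a, 'b) monoid_scheme \<Rightarrow> 'a set \<Rightarrow> 'a set \<Rightarrow> 'a set" where
  "outer_boundary G S F = {g \<otimes>\<^bsub>G\<^esub> s | g s. g \<in> F \<and> s \<in> sym_gens G S} - F"

definition optimal_for ::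
  "('a, 'b) monoid_scheme \<Rightarrow> ('a set \<Rightarrow> 'a set) \<Rightarrow> 'a set \<Rightarrow> bool" where
  "optimal_for G bd F \<longleftrightarrow>
     F \<subseteq> carrier G \<and> finite F \<and> F \<noteq> {} \<and>
     (\<forall>F'. F' \<subseteq> carrier G \<and> finite F' \<and> F' \<noteq> {} \<and> card F' \<le> card F \<longrightarrow>
        real (card (bd F')) / real (card F') \<ge> real (card (bd F)) / real (card F) \<and>
        (card F' < card F \<longrightarrow>
           real (card (bd F')) / real (card F') > real (card (bd F)) / real (card F)))"

definition optimal_inner :: "('a, 'b) monoid_scheme \<Rightarrow> 'a set \<Rightarrow> 'a set \<Rightarrow> bool" where
  "optimal_inner G S F = optimal_for G (inner_boundary G S) F"

definition optimal_outer :: "('a, 'b) monoid_scheme \<Rightarrow> 'a set \<Rightarrow> 'a set \<Rightarrow> bool" where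
  "optimal_outer G S F = optimal_for G (outer_boundary G S) F"

end

theory Submission
  imports Defs
begin

text \<open>
  Write \<open>N A = A \<union> \<partial>\<^sub>o\<^sub>u\<^sub>t A\<close> and \<open>I E = E - \<partial>\<^sub>i\<^sub>n E\<close>. Then
  \<open>N A \<subseteq> E \<longleftrightarrow> A \<subseteq> I E\<close>, the outer ratio of \<open>A\<close> is \<open>|N A|/|A| - 1\<close> and the inner
  ratio of \<open>E\<close> is \<open>1 - |I E|/|E|\<close>. Let \<open>E\<close> minimise the inner ratio among sets of
  size at most \<open>|N F|\<close>, with \<open>|E|\<close> least; it is optimal for the inner boundary, and
  every inner-optimal set of the same size is again a minimiser. Comparing with \<open>N F\<close>,
  whose interior contains \<open>F\<close>, gives \<open>|I E|/|E| \<ge> |F|/|N F|\<close>. The set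
  \<open>N (I E) \<subseteq> E\<close> has inner ratio at most that of \<open>E\<close>, so optimality forces
  \<open>E = N (I E)\<close>. Thus \<open>A = I E\<close> has \<open>|N A|/|A| \<le> |N F|/|F|\<close> and \<open>|N A| \<le> |N F|\<close>,
  and outer optimality of \<open>F\<close> (applied to \<open>A\<close>, or to a subset of \<open>A\<close> of size \<open>|F|\<close>)
  yields an outer-optimal \<open>F''\<close> of size \<open>|F|\<close> with \<open>N F'' = E\<close>.
\<close>

definition boundary_ratio :: "('a set \<Rightarrow> 'a set) \<Rightarrow> 'a set \<Rightarrow> real" where
  "boundary_ratio bd F = real (card (bd F)) / real (card F)"

definition closed_nbhd :: "('a, 'b) monoid_scheme \<Rightarrow> 'a set \<Rightarrow> 'a set \<Rightarrow> 'a set" where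
  "closed_nbhd G S A = A \<union> outer_boundary G S A"

definition interior_set :: "('a, 'b) monoid_scheme \<Rightarrow> 'a set \<Rightarrow> 'a set \<Rightarrow> 'a set" where
  "interior_set G S E = E - inner_boundary G S E"

lemma optimal_forD:
  assumes "optimal_for G bd F"
  shows "F \<subseteq> carrier G" "finite F" "F \<noteq> {}"
  using assms by (auto simp: optimal_for_def)

lemma optimal_for_ratio_le:
  assumes "optimal_for G bd F" "F' \<subseteq> carrier G" "finite F'" "F' \<noteq> {}" "card F' \<le> card F"
  shows "boundary_ratio bd F \<le> boundary_ratio bd F'"
  using assms unfolding optimal_for_def boundary_ratio_def by blast

lemma optimal_for_ratio_less:
  assumes "optimal_for G bd F" "F' \<subseteq> carrier G" "finite F'" "F' \<noteq> {}" "card F' < card F"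
  shows "boundary_ratio bd F < boundary_ratio bd F'"
  using assms unfolding optimal_for_def boundary_ratio_def by auto

lemma optimal_for_same_card_ratio:
  assumes "optimal_for G bd F" "F' \<subseteq> carrier G" "finite F'" "F' \<noteq> {}"
    and "card F' = card F" "boundary_ratio bd F' = boundary_ratio bd F"
  shows "optimal_for G bd F'"
  using assms unfolding optimal_for_def boundary_ratio_def by simp

lemma finite_boundary_ratios:
  assumes "\<And>E. bd E \<subseteq> E"
  shows "finite {boundary_ratio bd E | E. finite E \<and> card E \<le> m}"
proof (rule finite_subset)
  show "{boundary_ratio bd E | E. finite E \<and> card E \<le> m}
      \<subseteq> (\<lambda>(k, n). real k / real n) ` ({..m} \<times> {..m})"
  proof clarify
    fix E :: "'a set" assume "finite E" "card E \<le> m"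
    moreover from this have "card (bd E) \<le> card E"
      using assms card_mono by blast
    ultimately show "boundary_ratio bd E \<in> (\<lambda>(k, n). real k / real n) ` ({..m} \<times> {..m})"
      unfolding boundary_ratio_def by (intro image_eqI[of _ _ "(card (bd E), card E)"]) auto
  qed
qed simp

text \<open>
  A set minimising the ratio among sets of size at most \<open>|E\<^sub>1|\<close>, and of least size
  among such minimisers, is optimal.
\<close>
lemma exists_optimal_for_ratio_le:
  assumes bd_subset: "\<And>E. bd E \<subseteq> E"
    and E1: "E1 \<subseteq> carrier G" "finite E1" "E1 \<noteq> {}"
  shows "\<exists>E0. optimal_for G bd E0 \<and> card E0 \<le> card E1 \<and>
           boundary_ratio bd E0 \<le> boundary_ratio bd E1"
proof -
  define adm where "adm E \<longleftrightarrow> E \<subseteq> carrier G \<and> finite E \<and> E \<noteq> {} \<and> card E \<le> card E1"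
    for E
  define R where "R = boundary_ratio bd ` Collect adm"
  have "R \<subseteq> {boundary_ratio bd E | E. finite E \<and> card E \<le> card E1}"
    by (auto simp: R_def adm_def)
  then have "finite R"
    using finite_boundary_ratios[OF bd_subset] by (rule finite_subset)
  have "adm E1"
    using E1 by (simp add: adm_def)
  then have "R \<noteq> {}"
    by (auto simp: R_def)
  define \<mu> where "\<mu> = Min R"
  have \<mu>_le: "\<mu> \<le> boundary_ratio bd E" if "adm E" for E
    using Min_le[OF \<open>finite R\<close>] that by (auto simp: \<mu>_def R_def)
  define P where "P E \<longleftrightarrow> adm E \<and> boundary_ratio bd E = \<mu>" for E
  have "\<mu> \<in> R"
    using Min_in[OF \<open>finite R\<close> \<open>R \<noteq> {}\<close>] by (simp add: \<mu>_def)
  then obtain E where "P E"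
    by (auto simp: P_def R_def)
  then obtain E0 where "P E0" and E0_least: "\<And>E. P E \<Longrightarrow> card E0 \<le> card E"
    using ex_has_least_nat[of P E card] by blast
  have "optimal_for G bd E0"
    unfolding optimal_for_def boundary_ratio_def[symmetric]
  proof (intro conjI allI impI)
    show "E0 \<subseteq> carrier G" "finite E0" "E0 \<noteq> {}"
      using \<open>P E0\<close> by (auto simp: P_def adm_def)
    fix F' assume F': "F' \<subseteq> carrier G \<and> finite F' \<and> F' \<noteq> {} \<and> card F' \<le> card E0"
    then have "adm F'"
      using \<open>P E0\<close> by (auto simp: P_def adm_def)
    then show "boundary_ratio bd E0 \<le> boundary_ratio bd F'"
      using \<mu>_le \<open>P E0\<close> by (simp add: P_def)
    assume "card F' < card E0"
    then have "\<not> P F'"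
      using E0_least by fastforce
    then show "boundary_ratio bd E0 < boundary_ratio bd F'"
      using \<mu>_le[OF \<open>adm F'\<close>] \<open>adm F'\<close> \<open>P E0\<close> by (auto simp: P_def)
  qed
  then show ?thesis
    using \<open>P E0\<close> \<mu>_le[OF \<open>adm E1\<close>] by (auto simp: P_def adm_def)
qed

lemma closed_nbhd_eq:
  "closed_nbhd G S A = A \<union> (\<lambda>(g, s). g \<otimes>\<^bsub>G\<^esub> s) ` (A \<times> sym_gens G S)"
  by (auto simp: closed_nbhd_def outer_boundary_def)

lemma subset_closed_nbhd: "A \<subseteq> closed_nbhd G S A"
  by (simp add: closed_nbhd_def)

lemma closed_nbhd_mono: "A \<subseteq> B \<Longrightarrow> closed_nbhd G S A \<subseteq> closed_nbhd G S B"
  by (auto simp: closed_nbhd_eq)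

lemma finite_closed_nbhd:
  "finite S \<Longrightarrow> finite A \<Longrightarrow> finite (closed_nbhd G S A)"
  by (simp add: closed_nbhd_eq sym_gens_def)

lemma closed_nbhd_subset_carrier:
  assumes "group G" "S \<subseteq> carrier G" "A \<subseteq> carrier G"
  shows "closed_nbhd G S A \<subseteq> carrier G"
proof -
  have "sym_gens G S \<subseteq> carrier G"
    using assms by (auto simp: sym_gens_def)
  then show ?thesis
    using assms by (auto simp: closed_nbhd_eq intro: group.is_monoid monoid.m_closed)
qed

lemma inner_boundary_subset: "inner_boundary G S E \<subseteq> E"
  by (auto simp: inner_boundary_def)

lemma interior_set_subset: "interior_set G S E \<subseteq> E"
  by (auto simp: interior_set_def)

lemma closed_nbhd_subset_iff: "closed_nbhd G S A \<subseteq> E \<longleftrightarrow> A \<subseteq> interior_set G S E"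
  by (auto simp: closed_nbhd_eq interior_set_def inner_boundary_def)

lemma outer_ratio_eq:
  assumes "finite S" "finite A" "A \<noteq> {}"
  shows "boundary_ratio (outer_boundary G S) A = card (closed_nbhd G S A) / card A - 1"
proof -
  have "closed_nbhd G S A = A \<union> outer_boundary G S A" "A \<inter> outer_boundary G S A = {}"
    by (auto simp: closed_nbhd_def outer_boundary_def)
  moreover have "finite (outer_boundary G S A)"
    using finite_closed_nbhd[OF assms(1,2), of G] by (simp add: closed_nbhd_def)
  ultimately have "card (closed_nbhd G S A) = card A + card (outer_boundary G S A)"
    using assms(2) by (simp add: card_Un_disjoint)
  then show ?thesis
    using assms(2,3) by (simp add: boundary_ratio_def field_simps)
qed

lemma inner_ratio_eq:
  assumes "finite E" "E \<noteq> {}"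
  shows "boundary_ratio (inner_boundary G S) E = 1 - card (interior_set G S E) / card E"
proof -
  note sub = inner_boundary_subset[of G S E]
  have "card (interior_set G S E) = card E - card (inner_boundary G S E)"
    unfolding interior_set_def using card_Diff_subset[OF finite_subset[OF sub assms(1)] sub] .
  then have card_eq:
    "real (card (inner_boundary G S E)) = real (card E) - card (interior_set G S E)"
    using card_mono[OF assms(1) sub] by simp
  show ?thesis
    using assms unfolding boundary_ratio_def card_eq
    by (simp add: diff_divide_distrib card_gt_0_iff)
qed

lemma inner_ratio_le_of_subset_interior:
  assumes "finite E" "E \<noteq> {}" "A \<subseteq> interior_set G S E"
  shows "boundary_ratio (inner_boundary G S) E \<le> 1 - card A / card E"
proof -
  have "card A \<le> card (interior_set G S E)"
    using assms by (meson card_mono finite_subset interior_set_subset)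
  then show ?thesis
    using assms(1,2) by (simp add: inner_ratio_eq divide_right_mono)
qed

text \<open>
  The interior of \<open>E\<close> is also contained in the interior of the smaller set
  \<open>N (I E)\<close>, whose inner ratio is therefore no larger than that of \<open>E\<close>.
\<close>
lemma optimal_inner_closed_nbhd_interior:
  assumes opt: "optimal_inner G S E" and ne: "interior_set G S E \<noteq> {}"
  shows "closed_nbhd G S (interior_set G S E) = E"
proof -
  define A where "A = interior_set G S E"
  define B where "B = closed_nbhd G S A"
  note E = optimal_forD[OF opt[unfolded optimal_inner_def]]
  have "B \<subseteq> E" "A \<subseteq> interior_set G S B"
    using closed_nbhd_subset_iff[of G S A E] closed_nbhd_subset_iff[of G S A B]
    by (simp_all add: A_def B_def)
  have B: "B \<subseteq> carrier G" "finite B" "B \<noteq> {}"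
    using \<open>B \<subseteq> E\<close> E(1) finite_subset[OF \<open>B \<subseteq> E\<close> E(2)] ne subset_closed_nbhd[of A G S]
    by (auto simp: A_def B_def)
  have "card B \<le> card E"
    using E(2) \<open>B \<subseteq> E\<close> by (rule card_mono)
  have "boundary_ratio (inner_boundary G S) B \<le> 1 - card A / card B"
    using B(2,3) \<open>A \<subseteq> interior_set G S B\<close> by (rule inner_ratio_le_of_subset_interior)
  also have "\<dots> \<le> 1 - card A / card E"
    using \<open>card B \<le> card E\<close> B(2,3) by (simp add: frac_le card_gt_0_iff)
  also have "\<dots> = boundary_ratio (inner_boundary G S) E"
    using E(2,3) by (simp add: inner_ratio_eq A_def)
  finally have "\<not> card B < card E"
    using optimal_for_ratio_less[OF opt[unfolded optimal_inner_def] B] by linarith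
  then show ?thesis
    using card_subset_eq[OF E(2) \<open>B \<subseteq> E\<close>] \<open>card B \<le> card E\<close> by (simp add: A_def B_def)
qed

lemma optimal_outer_of_ratio_le:
  assumes "finite S" and opt: "optimal_outer G S F"
    and A: "A \<subseteq> carrier G" "finite A" "A \<noteq> {}"
    and ratio_le: "boundary_ratio (outer_boundary G S) A \<le> boundary_ratio (outer_boundary G S) F"
    and card_le: "card (closed_nbhd G S A) \<le> card (closed_nbhd G S F)"
  shows "\<exists>F''. card F'' = card F \<and> optimal_outer G S F'' \<and>
           closed_nbhd G S F'' = closed_nbhd G S A"
proof -
  note opt' = opt[unfolded optimal_outer_def]
  have F: "finite F" "F \<noteq> {}"
    using optimal_forD[OF opt'] by simp_all
  show ?thesis
  proof (cases "card A \<le> card F")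
    case True
    have "\<not> card A < card F"
      using optimal_for_ratio_less[OF opt' A] ratio_le by fastforce
    then have "card A = card F"
      using True by simp
    moreover have "boundary_ratio (outer_boundary G S) A = boundary_ratio (outer_boundary G S) F"
      using optimal_for_ratio_le[OF opt' A True] ratio_le by simp
    ultimately have "optimal_outer G S A"
      using optimal_for_same_card_ratio[OF opt' A] by (simp add: optimal_outer_def)
    then show ?thesis
      using \<open>card A = card F\<close> by blast
  next
    case False
    then obtain A0 where "A0 \<subseteq> A" "card A0 = card F"
      using obtain_subset_with_card_n[of "card F" A] by auto
    then have A0: "A0 \<subseteq> carrier G" "finite A0" "A0 \<noteq> {}"
      using A F by (auto intro: finite_subset)
    have "card (closed_nbhd G S F) / card F \<le> card (closed_nbhd G S A0) / card F"
      using optimal_for_ratio_le[OF opt' A0] \<open>card A0 = card F\<close>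
        outer_ratio_eq[OF \<open>finite S\<close> A0(2,3), of G] outer_ratio_eq[OF \<open>finite S\<close> F, of G]
      by simp
    then have "card (closed_nbhd G S F) \<le> card (closed_nbhd G S A0)"
      using F by (simp add: divide_le_cancel card_gt_0_iff)
    moreover have sub: "closed_nbhd G S A0 \<subseteq> closed_nbhd G S A"
      using \<open>A0 \<subseteq> A\<close> by (rule closed_nbhd_mono)
    moreover have fin: "finite (closed_nbhd G S A)"
      using \<open>finite S\<close> A(2) by (rule finite_closed_nbhd)
    ultimately have card_A0: "card (closed_nbhd G S A0) = card (closed_nbhd G S A)"
      "card (closed_nbhd G S A0) = card (closed_nbhd G S F)"
      using card_le card_mono[OF fin sub] by linarith+
    then have "closed_nbhd G S A0 = closed_nbhd G S A"
      using card_subset_eq[OF fin sub] by simp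
    have "boundary_ratio (outer_boundary G S) A0 = boundary_ratio (outer_boundary G S) F"
      using \<open>card A0 = card F\<close> card_A0(2)
        outer_ratio_eq[OF \<open>finite S\<close> A0(2,3), of G] outer_ratio_eq[OF \<open>finite S\<close> F, of G]
      by simp
    then have "optimal_outer G S A0"
      using optimal_for_same_card_ratio[OF opt' A0 \<open>card A0 = card F\<close>]
      by (simp add: optimal_outer_def)
    then show ?thesis
      using \<open>closed_nbhd G S A0 = closed_nbhd G S A\<close> \<open>card A0 = card F\<close> by blast
  qed
qed

lemma optimal_inner_eq_closed_nbhd_optimal_outer:
  assumes "finite S" and opt_F: "optimal_outer G S F" and opt_E: "optimal_inner G S E"
    and card_le: "card E \<le> card (closed_nbhd G S F)"
    and ratio_le: "boundary_ratio (inner_boundary G S) E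
                     \<le> boundary_ratio (inner_boundary G S) (closed_nbhd G S F)"
  shows "\<exists>F''. card F'' = card F \<and> optimal_outer G S F'' \<and> closed_nbhd G S F'' = E"
proof -
  define A where "A = interior_set G S E"
  define N where "N = closed_nbhd G S F"
  note F = optimal_forD[OF opt_F[unfolded optimal_outer_def]]
  note E = optimal_forD[OF opt_E[unfolded optimal_inner_def]]
  have N: "finite N" "N \<noteq> {}"
    using finite_closed_nbhd[OF \<open>finite S\<close> F(2)] subset_closed_nbhd[of F G S] F(3)
    by (auto simp: N_def)
  have "F \<subseteq> interior_set G S N"
    using closed_nbhd_subset_iff[of G S F N] by (simp add: N_def)
  then have "boundary_ratio (inner_boundary G S) N \<le> 1 - card F / card N"
    by (rule inner_ratio_le_of_subset_interior[OF N])
  moreover have "boundary_ratio (inner_boundary G S) E = 1 - card A / card E"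
    unfolding A_def using E(2,3) by (rule inner_ratio_eq)
  ultimately have ratio_ge: "card F / card N \<le> card A / card E"
    using ratio_le by (simp add: N_def)
  have pos: "0 < real (card F)" "0 < real (card N)" "0 < real (card E)"
    using F N E by (simp_all add: card_gt_0_iff)
  then have "0 < card A / card E"
    using ratio_ge divide_pos_pos[OF pos(1,2)] by linarith
  then have "A \<noteq> {}"
    by auto
  have A: "A \<subseteq> carrier G" "finite A"
    using E(1) finite_subset[OF interior_set_subset E(2)] interior_set_subset[of G S E]
    by (auto simp: A_def)
  then have "0 < real (card A)"
    using \<open>A \<noteq> {}\<close> by (simp add: card_gt_0_iff)
  have "closed_nbhd G S A = E"
    using optimal_inner_closed_nbhd_interior[OF opt_E] \<open>A \<noteq> {}\<close> by (simp add: A_def)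
  have "card E / card A \<le> card N / card F"
    using ratio_ge pos \<open>0 < real (card A)\<close> by (simp add: field_simps)
  then have "boundary_ratio (outer_boundary G S) A \<le> boundary_ratio (outer_boundary G S) F"
    using outer_ratio_eq[OF \<open>finite S\<close> A(2) \<open>A \<noteq> {}\<close>, of G]
      outer_ratio_eq[OF \<open>finite S\<close> F(2,3), of G]
      \<open>closed_nbhd G S A = E\<close>
    by (simp add: N_def)
  then show ?thesis
    using optimal_outer_of_ratio_le[OF \<open>finite S\<close> opt_F A \<open>A \<noteq> {}\<close>] card_le
      \<open>closed_nbhd G S A = E\<close>
    by simp
qed

theorem mainTheorem4:
  fixes G :: "('a, 'b) monoid_scheme" and S :: "'a set" and F :: "'a set"
  assumes "group G"
    and "S \<subseteq> carrier G" and "finite S" and "generate G S = carrier G"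
    and "optimal_outer G S F"
  shows "\<exists>Fs. card Fs = card F \<and> optimal_outer G S Fs \<and>
            optimal_inner G S (Fs \<union> outer_boundary G S Fs) \<and>
            (\<forall>E. card E = card (Fs \<union> outer_boundary G S Fs) \<and> optimal_inner G S E \<longrightarrow>
               (\<exists>F''. card F'' = card F \<and> optimal_outer G S F'' \<and>
                      E = F'' \<union> outer_boundary G S F''))"
proof -
  note F = optimal_forD[OF assms(5)[unfolded optimal_outer_def]]
  define N where "N = closed_nbhd G S F"
  have N: "N \<subseteq> carrier G" "finite N" "N \<noteq> {}"
    using closed_nbhd_subset_carrier[OF assms(1,2) F(1)] finite_closed_nbhd[OF assms(3) F(2)]
      subset_closed_nbhd[of F G S] F(3)
    by (auto simp: N_def)
  obtain E0 where E0: "optimal_inner G S E0" "card E0 \<le> card N"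
      "boundary_ratio (inner_boundary G S) E0 \<le> boundary_ratio (inner_boundary G S) N"
    using exists_optimal_for_ratio_le[OF inner_boundary_subset[of G S] N]
    unfolding optimal_inner_def by blast
  obtain Fs where Fs: "card Fs = card F" "optimal_outer G S Fs" "closed_nbhd G S Fs = E0"
    using optimal_inner_eq_closed_nbhd_optimal_outer[OF assms(3,5) E0[unfolded N_def]] by blast
  have every_optimal_is_nbhd:
    "\<exists>F''. card F'' = card F \<and> optimal_outer G S F'' \<and> closed_nbhd G S F'' = E"
    if "card E = card E0" "optimal_inner G S E" for E
  proof -
    have "boundary_ratio (inner_boundary G S) E \<le> boundary_ratio (inner_boundary G S) E0"
      using optimal_for_ratio_le[OF that(2)[unfolded optimal_inner_def]
          optimal_forD[OF E0(1)[unfolded optimal_inner_def]]] that(1)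
      by simp
    then show ?thesis
      using optimal_inner_eq_closed_nbhd_optimal_outer[OF assms(3,5) that(2)] E0(2,3) that(1)
      by (simp add: N_def)
  qed
  show ?thesis
    unfolding closed_nbhd_def[symmetric]
  proof (rule exI[of _ Fs], intro conjI allI impI)
    fix E assume "card E = card (closed_nbhd G S Fs) \<and> optimal_inner G S E"
    then obtain F'' where "card F'' = card F" "optimal_outer G S F''" "closed_nbhd G S F'' = E"
      using every_optimal_is_nbhd Fs(3) by blast
    then show "\<exists>F''. card F'' = card F \<and> optimal_outer G S F'' \<and> E = closed_nbhd G S F''"
      by blast
  qed (use Fs E0(1) in simp_all)
qed

end
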